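(* Let $p$ be a prime and $q=p^2$. Let $1\le s\le q-1$ and let $L\subseteq\{0,1,\ldots,q-1\}$ be an interval in the modulo $q$ sense of size $s$. If $\mathcal{F}\subseteq2^{[n]}$ is a $q$-modular $L$-avoiding $L$-intersecting system, then $$|\mathcal{F}|\le\sum_{i=0}^{2s-1}\binom{n}{i}.$$
   Context: $L\subseteq\{0,\ldots,q-1\}$ is an interval in the modulo $q$ sense of size $s$ if $L$ is the set of residues in $\{0,\ldots,q-1\}$ of $a,a+1,\ldots,a+s-1$ for some integer $a$. For $L\subseteq\{0,\ldots,q-1\}$, $\mathcal{F}\subseteq2^{[n]}$ is $q$-modular $L$-intersecting if for all distinct $A,B\in\mathcal{F}$, $|A\cap B|\equiv\ell\pmod q$ for some $\ell\in L$, and $q$-modular $L$-avoiding if for every $A\in\mathcal{F}$, $|A|\not\equiv\ell\pmod q$ for all $\ell\in L$. *)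

theory Defs
  imports Main "HOL-Computational_Algebra.Primes"
begin

definition mod_interval :: "nat \<Rightarrow> nat \<Rightarrow> nat set \<Rightarrow> bool" where
  "mod_interval q s L \<longleftrightarrow> (\<exists>a::int. L = {nat ((a + int j) mod int q) | j. j < s})"

definition modular_L_intersecting :: "nat \<Rightarrow> nat set \<Rightarrow> nat set set \<Rightarrow> bool" where
  "modular_L_intersecting q L F \<longleftrightarrow>
     (\<forall>A\<in>F. \<forall>B\<in>F. A \<noteq> B \<longrightarrow> (\<exists>l\<in>L. card (A \<inter> B) mod q = l mod q))"

definition modular_L_avoiding :: "nat \<Rightarrow> nat set \<Rightarrow> nat set set \<Rightarrow> bool" where
  "modular_L_avoiding q L F \<longleftrightarrow> (\<forall>A\<in>F. \<forall>l\<in>L. \<not> card A mod q = l mod q)"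

end

theory Submission
  imports Defs HOL.Rat HOL.Vector_Spaces "HOL-Library.Function_Algebras"
begin

text \<open>Let \<open>L\<close> be the residues of \<open>a, \<dots>, a + s - 1\<close> modulo \<open>p\<^sup>2\<close> and write
  \<open>t = |A \<inter> X| - a\<close>. To each \<open>A \<in> F\<close> attach the function of \<open>X\<close>
  \<open>f\<^sub>A(X) = (\<Prod>j<s. t - j) \<cdot> (\<Prod>j<s, j \<noteq> j\<^sub>A. t - j) / p\<^bsup>e\<^sub>A\<^esup>\<close>,
  a polynomial of degree \<open>2s - 1\<close> in \<open>|A \<inter> X|\<close>, hence a combination of the monomials
  \<open>[S \<subseteq> X]\<close> with \<open>|S| \<le> 2s - 1\<close>. As \<open>|A|\<close> avoids \<open>L\<close>, no factor of \<open>f\<^sub>A(A)\<close> is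
  divisible by \<open>p\<^sup>2\<close>, so with \<open>e\<^sub>A\<close> the exact power of \<open>p\<close> the value \<open>f\<^sub>A(A)\<close> is an integer
  prime to \<open>p\<close>. For \<open>B \<noteq> A\<close> some factor of \<open>f\<^sub>A(B)\<close> is divisible by \<open>p\<^sup>2\<close>; since any \<open>s\<close>
  consecutive integers contain \<open>\<lfloor>s/p\<rfloor>\<close> or \<open>\<lfloor>s/p\<rfloor> + 1\<close> multiples of \<open>p\<close>, this forces
  \<open>p\<close> to divide the integer \<open>f\<^sub>A(B)\<close>. So the matrix \<open>(f\<^sub>A(B))\<close> is diagonal and invertible
  modulo \<open>p\<close>, the \<open>f\<^sub>A\<close> are linearly independent over \<open>\<rat>\<close>, and \<open>|F|\<close> is at most the
  number of monomials.\<close>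

definition fscale :: "rat \<Rightarrow> ('a \<Rightarrow> rat) \<Rightarrow> 'a \<Rightarrow> rat" where
  "fscale c f = (\<lambda>x. c * f x)"

interpretation fv: vector_space fscale
  by unfold_locales (auto simp: fscale_def fun_eq_iff algebra_simps)

lemma sum_fun_apply: "(\<Sum>i\<in>I. f i) x = (\<Sum>i\<in>I. f i x)"
  by (induction I rule: infinite_finite_induct) auto

section \<open>Multilinear polynomials in the characteristic vector\<close>

definition monomial :: "'a set \<Rightarrow> 'a set \<Rightarrow> rat" where
  "monomial S X = (if S \<subseteq> X then 1 else 0)"

definition monomial_span :: "'a set \<Rightarrow> nat \<Rightarrow> ('a set \<Rightarrow> rat) set" where
  "monomial_span A d = fv.span (monomial ` {S. S \<subseteq> A \<and> card S \<le> d})"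

lemma monomial_in_monomial_span: "S \<subseteq> A \<Longrightarrow> card S \<le> d \<Longrightarrow> monomial S \<in> monomial_span A d"
  unfolding monomial_span_def by (intro fv.span_base imageI) simp

lemma monomial_times_card_inter:
  assumes "finite A" "S \<subseteq> A" "card S \<le> d"
  shows "(\<lambda>X. monomial S X * (of_nat (card (A \<inter> X)) - c)) \<in> monomial_span A (Suc d)"
proof -
  have "(\<lambda>X. monomial S X * (of_nat (card (A \<inter> X)) - c)) =
      (\<Sum>i\<in>A. monomial (insert i S)) + fscale (- c) (monomial S)"
  proof
    fix X
    have "of_nat (card (A \<inter> X)) = (\<Sum>i\<in>A. (if i \<in> X then 1 else 0 :: rat))"
      using assms(1) by (simp add: sum.If_cases Int_commute)
    then have "monomial S X * of_nat (card (A \<inter> X)) = (\<Sum>i\<in>A. monomial S X * (if i \<in> X then 1 else 0))"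
      by (simp add: sum_distrib_left)
    also have "\<dots> = (\<Sum>i\<in>A. monomial (insert i S) X)"
      by (rule sum.cong) (auto simp: monomial_def)
    finally show "monomial S X * (of_nat (card (A \<inter> X)) - c) =
        ((\<Sum>i\<in>A. monomial (insert i S)) + fscale (- c) (monomial S)) X"
      by (simp add: sum_fun_apply fscale_def algebra_simps)
  qed
  moreover have "card (insert i S) \<le> Suc d" for i
    using assms(3) by (intro card_insert_le_m1) simp_all
  then have "(\<Sum>i\<in>A. monomial (insert i S)) \<in> monomial_span A (Suc d)"
    unfolding monomial_span_def using assms
    by (intro fv.span_sum monomial_in_monomial_span[unfolded monomial_span_def]) auto
  moreover have "fscale (- c) (monomial S) \<in> monomial_span A (Suc d)"
    unfolding monomial_span_def using assms
    by (intro fv.span_scale monomial_in_monomial_span[unfolded monomial_span_def]) auto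
  ultimately show ?thesis
    unfolding monomial_span_def by (simp only: fv.span_add)
qed

lemma times_card_inter_in_monomial_span:
  assumes "finite A" "g \<in> monomial_span A d"
  shows "(\<lambda>X. g X * (of_nat (card (A \<inter> X)) - c)) \<in> monomial_span A (Suc d)"
  using assms(2) unfolding monomial_span_def
proof (induction rule: fv.span_induct_alt)
  case base
  then show ?case by (simp add: fv.span_zero[unfolded zero_fun_def])
next
  case (step e x y)
  then obtain S where S: "x = monomial S" "S \<subseteq> A" "card S \<le> d" by auto
  have "(\<lambda>X. (fscale e x + y) X * (of_nat (card (A \<inter> X)) - c)) =
      fscale e (\<lambda>X. monomial S X * (of_nat (card (A \<inter> X)) - c)) +
      (\<lambda>X. y X * (of_nat (card (A \<inter> X)) - c))"
    by (auto simp: fun_eq_iff fscale_def S algebra_simps)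
  then show ?case
    using monomial_times_card_inter[OF assms(1) S(2,3), of c] step(2)
    unfolding monomial_span_def by (simp add: fv.span_add fv.span_scale)
qed

lemma times_prod_card_inter_in_monomial_span:
  assumes "finite A" "finite J" "g \<in> monomial_span A d"
  shows "(\<lambda>X. g X * (\<Prod>j\<in>J. of_nat (card (A \<inter> X)) - c j)) \<in> monomial_span A (d + card J)"
  using assms(2)
proof (induction J rule: finite_induct)
  case empty
  then show ?case using assms(3) by simp
next
  case (insert j J)
  then show ?case
    using times_card_inter_in_monomial_span[OF assms(1) insert(3), of "c j"]
    by (simp add: mult_ac)
qed

lemma card_subsets_card_le:
  assumes "finite U"
  shows "card {S. S \<subseteq> U \<and> card S \<le> d} = (\<Sum>i = 0..d. card U choose i)"
proof -
  have "{S. S \<subseteq> U \<and> card S \<le> d} = (\<Union>i\<in>{0..d}. {S. S \<subseteq> U \<and> card S = i})"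
    by auto
  moreover have "card (\<Union>i\<in>{0..d}. {S. S \<subseteq> U \<and> card S = i}) =
      (\<Sum>i = 0..d. card {S. S \<subseteq> U \<and> card S = i})"
    using assms by (intro card_UN_disjoint) auto
  ultimately show ?thesis using assms by (simp add: n_subsets)
qed

lemma monomial_span_mono: "A \<subseteq> U \<Longrightarrow> monomial_span A d \<subseteq> monomial_span U d"
  unfolding monomial_span_def by (intro fv.span_mono image_mono) auto

lemma card_le_sum_choose_if_independent_in_monomial_span:
  assumes "inj_on f F" "fv.independent (f ` F)"
    and "\<And>A. A \<in> F \<Longrightarrow> A \<subseteq> U \<and> f A \<in> monomial_span A d" "finite U"
  shows "card F \<le> (\<Sum>i = 0..d. card U choose i)"
proof -
  let ?S = "{S. S \<subseteq> U \<and> card S \<le> d}"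
  have fin: "finite ?S" using assms(4) by simp
  have "f ` F \<subseteq> monomial_span U d"
  proof (rule image_subsetI)
    fix A assume "A \<in> F"
    then show "f A \<in> monomial_span U d"
      using assms(3) monomial_span_mono by (meson subsetD)
  qed
  then have "card (f ` F) \<le> card (monomial ` ?S)"
    using fv.independent_span_bound[OF finite_imageI[OF fin] assms(2)]
    unfolding monomial_span_def by simp
  also have "\<dots> \<le> card ?S"
    using fin by (rule card_image_le)
  finally show ?thesis
    using assms(1,4) by (simp add: card_image card_subsets_card_le)
qed

section \<open>Independence from a nonsingular diagonal modulo a prime\<close>

lemma integer_kernel_trivial_if_diagonal_mod_prime:
  fixes p :: int and m :: "'a \<Rightarrow> int"
  assumes "prime p" "finite T"
    and off: "\<And>A B. A \<in> T \<Longrightarrow> B \<in> T \<Longrightarrow> A \<noteq> B \<Longrightarrow> p dvd N A B"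
    and diag: "\<And>B. B \<in> T \<Longrightarrow> \<not> p dvd N B B"
    and kernel: "\<And>B. B \<in> T \<Longrightarrow> (\<Sum>A\<in>T. m A * N A B) = 0"
    and "A \<in> T"
  shows "m A = 0"
proof -
  \<comment> \<open>Modulo \<open>p\<close> the kernel equations are diagonal, so every \<open>m A\<close> is divisible by every power of \<open>p\<close>.\<close>
  have "\<forall>A\<in>T. p ^ i dvd m A" for i
  proof (induction i)
    case (Suc i)
    define m' where "m' A = m A div p ^ i" for A
    have m': "m A = p ^ i * m' A" if "A \<in> T" for A
      using Suc that unfolding m'_def by simp
    have "p dvd m' B" if B: "B \<in> T" for B
    proof -
      have "p ^ i * (\<Sum>A\<in>T. m' A * N A B) = 0"
        using kernel[OF B] by (simp add: sum_distrib_left m' mult.assoc)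
      then have "m' B * N B B = - (\<Sum>A\<in>T-{B}. m' A * N A B)"
        using assms(1,2) B by (simp add: sum.remove)
      moreover have "p dvd (\<Sum>A\<in>T-{B}. m' A * N A B)"
        using off B by (intro dvd_sum) auto
      ultimately have "p dvd m' B * N B B" by simp
      then show ?thesis
        using diag[OF B] assms(1) by (simp add: prime_dvd_mult_iff)
    qed
    then show ?case using m' by (simp add: mult_dvd_mono)
  qed simp
  then have "{i. p ^ i dvd m A} = UNIV" using \<open>A \<in> T\<close> by auto
  moreover have "\<not> is_unit p" using assms(1) not_prime_unit by blast
  ultimately show ?thesis
    using finite_divisor_powers[of "m A" p] by auto
qed

lemma rat_common_denominator:
  fixes c :: "'a \<Rightarrow> rat"
  assumes "finite T"
  obtains d :: int where "d \<noteq> 0" "\<And>A. A \<in> T \<Longrightarrow> of_int d * c A \<in> \<int>"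
proof
  define den where "den A = snd (quotient_of (c A))" for A
  show "(\<Prod>A\<in>T. den A) \<noteq> 0"
    using assms by (simp add: den_def) (metis quotient_of_denom_pos' less_irrefl)
  fix A assume "A \<in> T"
  then have "den A dvd (\<Prod>A\<in>T. den A)"
    using assms by (rule dvd_prodI[rotated])
  then obtain k where k: "(\<Prod>A\<in>T. den A) = den A * k" ..
  obtain n where n: "quotient_of (c A) = (n, den A)"
    unfolding den_def by (metis prod.collapse)
  have "of_int (den A) * c A = of_int n"
    using quotient_of_div[OF n] quotient_of_denom_pos[OF n] by simp
  then have "of_int (\<Prod>A\<in>T. den A) * c A = of_int (k * n)"
    unfolding k by (simp add: algebra_simps)
  then show "of_int (\<Prod>A\<in>T. den A) * c A \<in> \<int>" by simp
qed

lemma rat_kernel_trivial_if_diagonal_mod_prime: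
  fixes p :: int and c :: "'a \<Rightarrow> rat"
  assumes "prime p" "finite T"
    and off: "\<And>A B. A \<in> T \<Longrightarrow> B \<in> T \<Longrightarrow> A \<noteq> B \<Longrightarrow> p dvd N A B"
    and diag: "\<And>B. B \<in> T \<Longrightarrow> \<not> p dvd N B B"
    and kernel: "\<And>B. B \<in> T \<Longrightarrow> (\<Sum>A\<in>T. c A * of_int (N A B)) = 0"
    and "A \<in> T"
  shows "c A = 0"
proof -
  obtain d where d: "d \<noteq> 0" "\<And>A. A \<in> T \<Longrightarrow> of_int d * c A \<in> \<int>"
    using rat_common_denominator[OF assms(2)] by blast
  define m where "m A = \<lfloor>of_int d * c A\<rfloor>" for A
  have m: "of_int (m A) = of_int d * c A" if "A \<in> T" for A
    using d(2)[OF that] unfolding m_def by (elim Ints_cases) simp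
  have kernel_int: "(\<Sum>A\<in>T. m A * N A B) = 0" if B: "B \<in> T" for B
  proof -
    have "(of_int (\<Sum>A\<in>T. m A * N A B) :: rat) = of_int d * (\<Sum>A\<in>T. c A * of_int (N A B))"
      by (simp add: m sum_distrib_left mult.assoc)
    then have "(of_int (\<Sum>A\<in>T. m A * N A B) :: rat) = 0" using kernel[OF B] by simp
    then show ?thesis by (simp only: of_int_eq_0_iff)
  qed
  from assms(1,2) off diag kernel_int assms(6) have "m A = 0"
    by (rule integer_kernel_trivial_if_diagonal_mod_prime)
  then show ?thesis using m[OF \<open>A \<in> T\<close>] d(1) by simp
qed

lemma independent_if_diagonal_mod_prime:
  fixes f :: "'a \<Rightarrow> 'a \<Rightarrow> rat" and p :: int
  assumes "prime p" "finite F"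
    and eval: "\<And>A B. A \<in> F \<Longrightarrow> B \<in> F \<Longrightarrow> f A B = of_int (N A B)"
    and off: "\<And>A B. A \<in> F \<Longrightarrow> B \<in> F \<Longrightarrow> A \<noteq> B \<Longrightarrow> p dvd N A B"
    and diag: "\<And>B. B \<in> F \<Longrightarrow> \<not> p dvd N B B"
  shows "inj_on f F \<and> fv.independent (f ` F)"
proof
  show inj: "inj_on f F"
  proof (rule inj_onI, rule ccontr)
    fix A B assume "A \<in> F" "B \<in> F" "f A = f B" "A \<noteq> B"
    then have "N A A = N B A" using eval by (metis of_int_eq_iff)
    then show False using off diag \<open>A \<in> F\<close> \<open>B \<in> F\<close> \<open>A \<noteq> B\<close> by metis
  qed
  show "fv.independent (f ` F)"
  proof (rule fv.independent_if_scalars_zero)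
    fix u v assume sum0: "(\<Sum>v\<in>f ` F. fscale (u v) v) = 0" and "v \<in> f ` F"
    have "(\<Sum>A\<in>F. u (f A) * of_int (N A B)) = 0" if "B \<in> F" for B
    proof -
      have "(\<Sum>A\<in>F. fscale (u (f A)) (f A)) B = 0"
        using sum0 by (simp add: sum.reindex[OF inj])
      then show ?thesis
        using that eval by (simp add: sum_fun_apply fscale_def)
    qed
    then show "u v = 0"
      using rat_kernel_trivial_if_diagonal_mod_prime[OF assms(1,2), of N "u \<circ> f"] off diag
        \<open>v \<in> f ` F\<close> by auto
  qed (use assms(2) in simp)
qed

section \<open>Prime-power divisibility of a trimmed product\<close>

definition divisible_count :: "nat \<Rightarrow> int \<Rightarrow> nat set \<Rightarrow> nat" where
  "divisible_count p y J = card {j\<in>J. int p dvd y - int j}"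

lemma divisible_count_remove:
  assumes "finite J" "j \<in> J"
  shows "divisible_count p y J =
    divisible_count p y (J - {j}) + (if int p dvd y - int j then 1 else 0)"
proof (cases "int p dvd y - int j")
  case True
  then have "{i\<in>J. int p dvd y - int i} = insert j {i\<in>J - {j}. int p dvd y - int i}"
    using assms(2) by auto
  then show ?thesis using True assms(1) by (simp add: divisible_count_def)
next
  case False
  then have "{i\<in>J. int p dvd y - int i} = {i\<in>J - {j}. int p dvd y - int i}"
    by auto
  then show ?thesis using False by (simp add: divisible_count_def)
qed

lemma divisible_count_cong:
  assumes "int p dvd y - t"
  shows "divisible_count p y J = divisible_count p t J"
proof -
  have "int p dvd y - int j \<longleftrightarrow> int p dvd t - int j" for j
    using dvd_add_right_iff[OF assms, of "t - int j"] by simp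
  then show ?thesis by (simp add: divisible_count_def)
qed

lemma divisible_count_lessThan_bounds:
  assumes "0 < p"
  shows "s div p \<le> divisible_count p y {..<s}" "divisible_count p y {..<s} \<le> s div p + 1"
proof -
  define r where "r = nat (y mod int p)"
  have "r < p" using assms unfolding r_def by (simp add: nat_less_iff)
  have yr: "y mod int p = int r" unfolding r_def using assms by simp
  have "int p dvd y - int j \<longleftrightarrow> j mod p = r" for j
  proof -
    have "int p dvd y - int j \<longleftrightarrow> int j mod int p = y mod int p"
      by (metis mod_eq_dvd_iff)
    then show ?thesis unfolding yr by (simp add: of_nat_mod[symmetric] del: of_nat_mod)
  qed
  then have eq: "{j\<in>{..<s}. int p dvd y - int j} = {j. j < s \<and> j mod p = r}"
    by auto
  have fin: "finite {j. j < s \<and> j mod p = r}" by simp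
  have inj: "inj_on (\<lambda>i. r + p * i) X" for X using assms by (auto simp: inj_on_def)
  have "s div p = card ((\<lambda>i. r + p * i) ` {..<s div p})"
    using card_image[OF inj] by simp
  also have "\<dots> \<le> card {j. j < s \<and> j mod p = r}"
  proof (intro card_mono[OF fin] image_subsetI)
    fix i assume "i \<in> {..<s div p}"
    then have "p * Suc i \<le> p * (s div p)" by (intro mult_le_mono2) simp
    also have "\<dots> \<le> s" by simp
    finally show "r + p * i \<in> {j. j < s \<and> j mod p = r}" using \<open>r < p\<close> by auto
  qed
  finally show "s div p \<le> divisible_count p y {..<s}"
    unfolding divisible_count_def eq .
  have "card {j. j < s \<and> j mod p = r} \<le> card ((\<lambda>i. r + p * i) ` {..s div p})"
  proof (intro card_mono subsetI)
    fix j assume j: "j \<in> {j. j < s \<and> j mod p = r}"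
    then have "j = r + p * (j div p)" "j div p \<le> s div p"
      using mod_mult_div_eq[of j p] by (auto simp: div_le_mono)
    then show "j \<in> (\<lambda>i. r + p * i) ` {..s div p}" by blast
  qed simp
  also have "\<dots> = s div p + 1"
    using card_image[OF inj] by simp
  finally show "divisible_count p y {..<s} \<le> s div p + 1"
    unfolding divisible_count_def eq .
qed

definition pivot :: "nat \<Rightarrow> nat \<Rightarrow> int \<Rightarrow> nat" where
  "pivot p s y =
    (if \<exists>j<s. int p dvd y - int j then LEAST j. j < s \<and> int p dvd y - int j else 0)"

lemma pivot_less: "0 < s \<Longrightarrow> pivot p s y < s"
  unfolding pivot_def by (auto intro: LeastI2_ex)

lemma dvd_pivot: "j < s \<Longrightarrow> int p dvd y - int j \<Longrightarrow> int p dvd y - int (pivot p s y)"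
  unfolding pivot_def by (auto intro: LeastI2_ex)

text \<open>The pivot \<open>j\<^sub>A\<close> is a factor divisible by \<open>p\<close> at \<open>y = |A| - a\<close> whenever one exists;
  dropping exactly such a factor is what makes \<open>trimmed_exponent_le\<close> hold.\<close>

definition trimmed_square :: "nat \<Rightarrow> nat \<Rightarrow> int \<Rightarrow> int \<Rightarrow> int" where
  "trimmed_square p s y t = (\<Prod>j<s. t - int j) * (\<Prod>j\<in>{..<s} - {pivot p s y}. t - int j)"

definition trimmed_exponent :: "nat \<Rightarrow> nat \<Rightarrow> int \<Rightarrow> nat" where
  "trimmed_exponent p s y =
    divisible_count p y {..<s} + divisible_count p y ({..<s} - {pivot p s y})"

lemma prod_eq_prime_power_times_coprime:
  fixes p :: int
  assumes "prime p" "finite J" "\<And>j. j \<in> J \<Longrightarrow> \<not> p^2 dvd x j"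
  shows "\<exists>u. prod x J = p ^ card {j\<in>J. p dvd x j} * u \<and> \<not> p dvd u"
  using assms(2,3)
proof (induction J rule: finite_induct)
  case empty
  then show ?case using assms(1) not_prime_unit by auto
next
  case (insert j J)
  then obtain u where u: "prod x J = p ^ card {j\<in>J. p dvd x j} * u" "\<not> p dvd u" by auto
  show ?case
  proof (cases "p dvd x j")
    case True
    then obtain w where w: "x j = p * w" by auto
    then have "\<not> p dvd w" using insert(4)[of j] by (auto simp: power2_eq_square)
    have "{i\<in>insert j J. p dvd x i} = insert j {i\<in>J. p dvd x i}" using True by auto
    then have "card {i\<in>insert j J. p dvd x i} = Suc (card {i\<in>J. p dvd x i})"
      using insert(1,2) by simp
    then show ?thesis
      using insert(1,2) u w \<open>\<not> p dvd w\<close> assms(1)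
      by (intro exI[of _ "w * u"]) (auto simp: prime_dvd_mult_iff algebra_simps)
  next
    case False
    then have "{i\<in>insert j J. p dvd x i} = {i\<in>J. p dvd x i}" by auto
    then show ?thesis
      using insert(1,2) u False assms(1)
      by (intro exI[of _ "x j * u"]) (auto simp: prime_dvd_mult_iff algebra_simps)
  qed
qed

lemma prime_power_dvd_prod_shifts:
  assumes "finite J" "(int p)^2 dvd t - int j0"
  shows "int p ^ (divisible_count p t J + (if j0 \<in> J then 1 else 0)) dvd (\<Prod>j\<in>J. t - int j)"
proof -
  define g where "g j = (if int p dvd t - int j then 1 else 0) + (if j = j0 then 1 else 0 :: nat)" for j
  have "int p ^ g j dvd t - int j" for j
  proof (cases "j = j0")
    case True
    then show ?thesis using assms(2) by (auto simp: g_def power2_eq_square dvd_mult_left)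
  qed (auto simp: g_def)
  then have "int p ^ sum g J dvd (\<Prod>j\<in>J. t - int j)"
    unfolding power_sum by (intro prod_dvd_prod)
  moreover have "sum g J = divisible_count p t J + (if j0 \<in> J then 1 else 0)"
    using assms(1) by (simp add: g_def sum.distrib sum.If_cases divisible_count_def Int_def conj_commute)
  ultimately show ?thesis by simp
qed

lemma trimmed_square_exact:
  assumes "prime p" "\<And>j. j < s \<Longrightarrow> \<not> (int p)^2 dvd y - int j"
  obtains u where "trimmed_square p s y y = int p ^ trimmed_exponent p s y * u" "\<not> int p dvd u"
proof -
  have pr: "prime (int p)" using assms(1) by simp
  obtain u1 where u1: "(\<Prod>j<s. y - int j) = int p ^ divisible_count p y {..<s} * u1" "\<not> int p dvd u1"
    using prod_eq_prime_power_times_coprime[OF pr, of "{..<s}" "\<lambda>j. y - int j"] assms(2)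
    by (auto simp: divisible_count_def)
  obtain u2 where u2: "(\<Prod>j\<in>{..<s} - {pivot p s y}. y - int j) =
      int p ^ divisible_count p y ({..<s} - {pivot p s y}) * u2" "\<not> int p dvd u2"
    using prod_eq_prime_power_times_coprime[OF pr, of "{..<s} - {pivot p s y}" "\<lambda>j. y - int j"] assms(2)
    by (auto simp: divisible_count_def)
  show ?thesis
    using u1 u2 pr
    by (intro that[of "u1 * u2"]) (auto simp: trimmed_square_def trimmed_exponent_def power_add
        prime_dvd_mult_iff algebra_simps)
qed

lemma trimmed_exponent_le:
  fixes y t :: int
  assumes "0 < p" "j0 < s" "int p dvd t - int j0"
  defines "J \<equiv> {..<s} - {pivot p s y}"
  shows "trimmed_exponent p s y \<le>
    divisible_count p t {..<s} + divisible_count p t J + (if j0 \<in> J then 1 else 0)"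
proof -
  let ?js = "pivot p s y"
  have js: "?js \<in> {..<s}" using pivot_less assms(2) by simp
  have split: "divisible_count p x {..<s} = divisible_count p x J + (if int p dvd x - int ?js then 1 else 0)"
    for x unfolding J_def using js by (intro divisible_count_remove) auto
  show ?thesis
  proof (cases "\<exists>j<s. int p dvd y - int j")
    case False
    then have "divisible_count p y {..<s} = 0" by (simp add: divisible_count_def)
    then show ?thesis using split[of y] by (simp add: trimmed_exponent_def J_def)
  next
    case True
    then have y: "int p dvd y - int ?js" by (blast intro: dvd_pivot)
    show ?thesis
    proof (cases "int p dvd t - int ?js")
      case True
      have "y - t = (y - int ?js) - (t - int ?js)" by simp
      then have "int p dvd y - t" using y True by (metis dvd_diff)
      then show ?thesis
        by (simp add: trimmed_exponent_def J_def divisible_count_cong[of p y t])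
    next
      case False
      then have "j0 \<in> J" using assms(2,3) unfolding J_def by auto
      moreover have "divisible_count p y {..<s} \<le> divisible_count p t {..<s} + 1"
        using divisible_count_lessThan_bounds(1)[OF assms(1), where s=s and y=t]
          divisible_count_lessThan_bounds(2)[OF assms(1), where s=s and y=y] by linarith
      ultimately show ?thesis
        using split[of y] split[of t] y False by (simp add: trimmed_exponent_def J_def)
    qed
  qed
qed

lemma trimmed_square_lower:
  assumes "prime p" "j0 < s" "(int p)^2 dvd t - int j0"
  shows "int p ^ Suc (trimmed_exponent p s y) dvd trimmed_square p s y t"
proof -
  let ?J = "{..<s} - {pivot p s y}"
  have "int p dvd t - int j0" using assms(3) by (simp add: power2_eq_square dvd_mult_left)
  then have le: "Suc (trimmed_exponent p s y) \<le>
      (divisible_count p t {..<s} + 1) + (divisible_count p t ?J + (if j0 \<in> ?J then 1 else 0))"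
    using trimmed_exponent_le[of p j0 s t y] assms(1,2) prime_gt_0_nat by fastforce
  have "int p ^ (divisible_count p t {..<s} + 1) dvd (\<Prod>j<s. t - int j)"
    using prime_power_dvd_prod_shifts[of "{..<s}" p t j0] assms(2,3) by simp
  moreover have "int p ^ (divisible_count p t ?J + (if j0 \<in> ?J then 1 else 0)) dvd
      (\<Prod>j\<in>?J. t - int j)"
    using prime_power_dvd_prod_shifts[of ?J p t j0] assms(3) by simp
  ultimately have "int p ^ ((divisible_count p t {..<s} + 1) +
      (divisible_count p t ?J + (if j0 \<in> ?J then 1 else 0))) dvd trimmed_square p s y t"
    unfolding trimmed_square_def power_add by (rule mult_dvd_mono)
  with le show ?thesis by (meson dvd_trans le_imp_power_dvd)
qed

definition trimmed_fun :: "nat \<Rightarrow> nat \<Rightarrow> int \<Rightarrow> 'a set \<Rightarrow> 'a set \<Rightarrow> rat" where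
  "trimmed_fun p s a A X =
    of_int (trimmed_square p s (int (card A) - a) (int (card (A \<inter> X)) - a)) /
    of_int (int p ^ trimmed_exponent p s (int (card A) - a))"

lemma trimmed_fun_in_monomial_span:
  assumes "finite A" "0 < s"
  shows "trimmed_fun p s a A \<in> monomial_span A (2 * s - 1)"
proof -
  let ?J = "{..<s} - {pivot p s (int (card A) - a)}"
  let ?c = "\<lambda>j::nat. of_int a + of_nat j :: rat"
  let ?P = "\<lambda>J X. \<Prod>j\<in>J. of_nat (card (A \<inter> X)) - ?c j"
  have "monomial {} \<in> monomial_span A 0" by (rule monomial_in_monomial_span) simp_all
  from times_prod_card_inter_in_monomial_span[OF assms(1) finite_lessThan this, where c = ?c]
  have "(\<lambda>X. monomial {} X * ?P {..<s} X) \<in> monomial_span A s" by simp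
  from times_prod_card_inter_in_monomial_span[OF assms(1) finite_Diff[OF finite_lessThan] this, where c = ?c]
  have "(\<lambda>X. (monomial {} X * ?P {..<s} X) * ?P ?J X) \<in> monomial_span A (s + card ?J)" .
  moreover have "s + card ?J = 2 * s - 1" using pivot_less[OF assms(2)] by simp
  ultimately have "(\<lambda>X. (monomial {} X * ?P {..<s} X) * ?P ?J X) \<in> monomial_span A (2 * s - 1)"
    by simp
  moreover have "trimmed_fun p s a A =
      fscale (inverse (of_int (int p ^ trimmed_exponent p s (int (card A) - a))))
        (\<lambda>X. (monomial {} X * ?P {..<s} X) * ?P ?J X)"
    by (simp add: fun_eq_iff trimmed_fun_def fscale_def trimmed_square_def monomial_def
        of_int_prod divide_inverse algebra_simps)
  ultimately show ?thesis
    unfolding monomial_span_def by (simp only: fv.span_scale)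
qed

lemma trimmed_fun_self:
  assumes "prime p" "\<And>j. j < s \<Longrightarrow> \<not> (int p)^2 dvd int (card A) - a - int j"
  shows "\<exists>u. trimmed_fun p s a A A = of_int u \<and> \<not> int p dvd u"
proof -
  obtain u where "trimmed_square p s (int (card A) - a) (int (card A) - a) =
      int p ^ trimmed_exponent p s (int (card A) - a) * u" "\<not> int p dvd u"
    using trimmed_square_exact[OF assms] .
  then show ?thesis
    using prime_gt_0_nat[OF assms(1)] by (simp add: trimmed_fun_def)
qed

lemma trimmed_fun_other:
  assumes "prime p" "j0 < s" "(int p)^2 dvd int (card (A \<inter> B)) - a - int j0"
  shows "\<exists>w. trimmed_fun p s a A B = of_int (int p * w)"
proof -
  from trimmed_square_lower[OF assms]
  obtain w where "trimmed_square p s (int (card A) - a) (int (card (A \<inter> B)) - a) =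
      int p ^ Suc (trimmed_exponent p s (int (card A) - a)) * w" ..
  then show ?thesis
    using prime_gt_0_nat[OF assms(1)] by (simp add: trimmed_fun_def)
qed

lemma card_le_if_avoiding_intersecting_mod_prime_square:
  fixes p s :: nat and a :: int and F :: "'a set set"
  assumes "prime p" "0 < s" "finite U" "F \<subseteq> Pow U"
    and avoid: "\<And>A j. A \<in> F \<Longrightarrow> j < s \<Longrightarrow> \<not> (int p)^2 dvd int (card A) - a - int j"
    and intersect: "\<And>A B. A \<in> F \<Longrightarrow> B \<in> F \<Longrightarrow> A \<noteq> B \<Longrightarrow>
      \<exists>j<s. (int p)^2 dvd int (card (A \<inter> B)) - a - int j"
  shows "card F \<le> (\<Sum>i = 0..2 * s - 1. card U choose i)"
proof -
  let ?f = "trimmed_fun p s a"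
  define N where "N A B = \<lfloor>?f A B\<rfloor>" for A B :: "'a set"
  have diag: "?f A A = of_int (N A A) \<and> \<not> int p dvd N A A" if A: "A \<in> F" for A
  proof -
    obtain u where "?f A A = of_int u" "\<not> int p dvd u"
      using trimmed_fun_self[OF assms(1)] avoid[OF A] by blast
    then show ?thesis by (simp add: N_def)
  qed
  have off: "?f A B = of_int (N A B) \<and> int p dvd N A B"
    if AB: "A \<in> F" "B \<in> F" "A \<noteq> B" for A B
  proof -
    obtain j0 where "j0 < s" "(int p)^2 dvd int (card (A \<inter> B)) - a - int j0"
      using intersect[OF AB] by blast
    then obtain w where "?f A B = of_int (int p * w)"
      using trimmed_fun_other[OF assms(1)] by blast
    then show ?thesis unfolding N_def by (simp only: floor_of_int) simp
  qed
  have "inj_on ?f F \<and> fv.independent (?f ` F)"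
  proof (rule independent_if_diagonal_mod_prime[where N = N])
    show "prime (int p)" using assms(1) by simp
    show "finite F" using assms(3,4) by (simp add: finite_subset)
    show "?f A B = of_int (N A B)" if "A \<in> F" "B \<in> F" for A B
      using diag off that by (cases "A = B") auto
  qed (use diag off in auto)
  moreover have "A \<subseteq> U \<and> ?f A \<in> monomial_span A (2 * s - 1)" if "A \<in> F" for A
  proof
    show "A \<subseteq> U" using that assms(4) by blast
    then show "?f A \<in> monomial_span A (2 * s - 1)"
      using assms(2,3) finite_subset by (blast intro: trimmed_fun_in_monomial_span)
  qed
  ultimately show ?thesis
    using card_le_sum_choose_if_independent_in_monomial_span[of ?f F U] assms(3) by simp
qed

lemma mod_interval_residue_iff:
  assumes "0 < q" "L = {nat ((a + int j) mod int q) | j. j < s}"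
  shows "(\<exists>l\<in>L. k mod q = l mod q) \<longleftrightarrow> (\<exists>j<s. int q dvd int k - a - int j)"
proof -
  have "k mod q = nat ((a + int j) mod int q) mod q \<longleftrightarrow> int q dvd int k - a - int j" for j
  proof -
    have "k mod q = nat ((a + int j) mod int q) mod q \<longleftrightarrow>
        int k mod int q = (a + int j) mod int q"
    proof -
      have "0 \<le> (a + int j) mod int q" "(a + int j) mod int q < int q"
        using assms(1) by simp_all
      then show ?thesis
        by (auto simp: of_nat_mod[symmetric] nat_less_iff)
    qed
    also have "\<dots> \<longleftrightarrow> int q dvd int k - a - int j"
      by (simp add: mod_eq_dvd_iff diff_diff_eq)
    finally show ?thesis .
  qed
  then show ?thesis using assms(2) by blast
qed

theorem mainTheorem16:
  fixes p q n s :: nat and L :: "nat set" and F :: "nat set set"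
  assumes "prime p" and "q = p ^ 2"
    and "1 \<le> s" and "s \<le> q - 1"
    and "L \<subseteq> {0..<q}" and "mod_interval q s L"
    and "F \<subseteq> Pow {1..n}"
    and "modular_L_avoiding q L F" and "modular_L_intersecting q L F"
  shows "card F \<le> (\<Sum>i = 0..2 * s - 1. n choose i)"
proof -
  obtain a where L: "L = {nat ((a + int j) mod int q) | j. j < s}"
    using assms(6) unfolding mod_interval_def by blast
  have q: "0 < q" "int q = (int p)^2"
    using assms(1,2) prime_gt_0_nat by simp_all
  note residue = mod_interval_residue_iff[OF q(1) L, unfolded q(2)]
  have "card F \<le> (\<Sum>i = 0..2 * s - 1. card {1..n} choose i)"
  proof (rule card_le_if_avoiding_intersecting_mod_prime_square[OF assms(1) _ _ assms(7), where a = a])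
    show "\<not> (int p)^2 dvd int (card A) - a - int j" if "A \<in> F" "j < s" for A j
      using assms(8) that residue unfolding modular_L_avoiding_def by blast
    show "\<exists>j<s. (int p)^2 dvd int (card (A \<inter> B)) - a - int j"
      if "A \<in> F" "B \<in> F" "A \<noteq> B" for A B
      using assms(9) that residue unfolding modular_L_intersecting_def by blast
  qed (use assms(3) in simp_all)
  then show ?thesis by simp
qed

end
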